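(* Let $X$ be a finite set with $|X|\ge 4$ and let $\tau$ be a non-empty thin subset of $\binom{X}{3}$. Then there exists an unrooted caterpillar tree $T$ with leaf set $X$ for which the map ${\rm med}_T:\tau\to \mathring{V}(T)$, $s\mapsto{\rm med}_T(s)$, is one-to-one.
   Context: $L(\tau)=\bigcup_{s\in\tau}s$; $\tau\subseteq\binom{X}{3}$ is thin if $|L(\tau')|\ge|\tau'|+2$ for every non-empty $\tau'\subseteq\tau$. An unrooted phylogenetic $X$-tree is a tree whose leaves (degree-1 vertices) are bijectively labelled by $X$ and whose non-leaf vertices are unlabelled of degree at least 3; it is binary if all non-leaf vertices have degree 3. $\mathring{V}(T)$ denotes the set of interior (non-leaf) vertices. A cherry is a pair of leaves adjacent to a common vertex. An unrooted caterpillar tree on $X$ is an unrooted binary phylogenetic $X$-tree with at most 2 cherries. For $s=\{x,y,z\}$, ${\rm med}_T(s)$ is the unique vertex of $T$ lying on all three paths between pairs of $x,y,z$. *)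

theory Defs
  imports Main
begin

definition walk :: "('v \<times> 'v) set \<Rightarrow> 'v list \<Rightarrow> bool" where
  "walk E p \<longleftrightarrow> p \<noteq> [] \<and> (\<forall>i < length p - 1. (p ! i, p ! Suc i) \<in> E)"

definition gpath :: "('v \<times> 'v) set \<Rightarrow> 'v \<Rightarrow> 'v \<Rightarrow> 'v list \<Rightarrow> bool" where
  "gpath E u v p \<longleftrightarrow> walk E p \<and> distinct p \<and> hd p = u \<and> last p = v"

definition has_cycle :: "('v \<times> 'v) set \<Rightarrow> bool" where
  "has_cycle E \<longleftrightarrow> (\<exists>p. walk E p \<and> distinct p \<and> length p \<ge> 3 \<and> (last p, hd p) \<in> E)"

definition is_tree :: "'v set \<Rightarrow> ('v \<times> 'v) set \<Rightarrow> bool" where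
  "is_tree V E \<longleftrightarrow> finite V \<and> V \<noteq> {} \<and> E \<subseteq> V \<times> V \<and> sym E \<and> (\<forall>v. (v, v) \<notin> E)
     \<and> (\<forall>u\<in>V. \<forall>v\<in>V. \<exists>p. gpath E u v p) \<and> \<not> has_cycle E"

definition degree :: "('v \<times> 'v) set \<Rightarrow> 'v \<Rightarrow> nat" where
  "degree E v = card {u. (v, u) \<in> E}"

definition leaves :: "'v set \<Rightarrow> ('v \<times> 'v) set \<Rightarrow> 'v set" where
  "leaves V E = {v \<in> V. degree E v = 1}"

definition interior_vertices :: "'v set \<Rightarrow> ('v \<times> 'v) set \<Rightarrow> 'v set" where
  "interior_vertices V E = V - leaves V E"

definition phylo_tree :: "'a set \<Rightarrow> 'v set \<Rightarrow> ('v \<times> 'v) set \<Rightarrow> ('a \<Rightarrow> 'v) \<Rightarrow> bool" where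
  "phylo_tree X V E phi \<longleftrightarrow> is_tree V E \<and> bij_betw phi X (leaves V E)
     \<and> (\<forall>v \<in> interior_vertices V E. degree E v \<ge> 3)"

definition binary_phylo_tree :: "'a set \<Rightarrow> 'v set \<Rightarrow> ('v \<times> 'v) set \<Rightarrow> ('a \<Rightarrow> 'v) \<Rightarrow> bool" where
  "binary_phylo_tree X V E phi \<longleftrightarrow> phylo_tree X V E phi
     \<and> (\<forall>v \<in> interior_vertices V E. degree E v = 3)"

definition cherries :: "'v set \<Rightarrow> ('v \<times> 'v) set \<Rightarrow> 'v set set" where
  "cherries V E = {{a, b} | a b. a \<in> leaves V E \<and> b \<in> leaves V E \<and> a \<noteq> b
                     \<and> (\<exists>w. (a, w) \<in> E \<and> (b, w) \<in> E)}"

definition caterpillar :: "'a set \<Rightarrow> 'v set \<Rightarrow> ('v \<times> 'v) set \<Rightarrow> ('a \<Rightarrow> 'v) \<Rightarrow> bool" where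
  "caterpillar X V E phi \<longleftrightarrow> binary_phylo_tree X V E phi \<and> card (cherries V E) \<le> 2"

definition on_path :: "('v \<times> 'v) set \<Rightarrow> 'v \<Rightarrow> 'v \<Rightarrow> 'v \<Rightarrow> bool" where
  "on_path E u w v \<longleftrightarrow> (\<exists>p. gpath E u v p \<and> w \<in> set p)"

definition med :: "'v set \<Rightarrow> ('v \<times> 'v) set \<Rightarrow> ('a \<Rightarrow> 'v) \<Rightarrow> 'a set \<Rightarrow> 'v" where
  "med V E phi s = (THE v. v \<in> V \<and> (\<forall>a\<in>s. \<forall>b\<in>s. a \<noteq> b \<longrightarrow> on_path E (phi a) v (phi b)))"

definition thin :: "'a set set \<Rightarrow> bool" where
  "thin \<tau> \<longleftrightarrow> (\<forall>\<tau>'. \<tau>' \<subseteq> \<tau> \<and> \<tau>' \<noteq> {} \<longrightarrow> card (\<Union>\<tau>') \<ge> card \<tau>' + 2)"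

end

theory Submission
  imports Defs
begin

(* Order X so that no element is the middle element of two triples of tau, and hang the i-th
   element from the spine vertex i - 1 of a caterpillar (truncated at both ends of the spine).
   The median of a triple is then the spine vertex of its middle element, so distinct triples
   have distinct medians.

   The order is built by induction: for the first element y find a partner x such that at most
   one triple contains both and identifying y with x keeps the family thin, order the contracted
   family recursively with x first, and put y in front. A partner exists because overlapping
   tight subfamilies (|union F| = |F| + 2) of a thin family have tight union and intersection:
   x is taken from a triple s of a maximal tight family through y such that no tight subfamily
   avoiding s covers both y and x. *)

subsection \<open>Walks and paths\<close>

lemma walk_single[simp]: "walk E [x]"
  by (simp add: walk_def)

lemma walk_Nil[simp]: "\<not> walk E []"
  by (simp add: walk_def)

lemma walk_Cons_Cons[simp]: "walk E (x # y # p) \<longleftrightarrow> (x, y) \<in> E \<and> walk E (y # p)"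
  unfolding walk_def
  by (auto simp: nth_Cons split: nat.splits)

lemma walk_ConsD: "walk E (x # p) \<Longrightarrow> p \<noteq> [] \<Longrightarrow> walk E p"
  by (cases p) auto

lemma walk_append: "walk E (p @ [z]) \<Longrightarrow> walk E (z # q) \<Longrightarrow> walk E (p @ z # q)"
proof (induction p)
  case Nil then show ?case by simp
next
  case (Cons a p)
  then show ?case by (cases p) auto
qed

lemma walk_appendD1: "walk E (p @ q) \<Longrightarrow> p \<noteq> [] \<Longrightarrow> walk E p"
proof (induction p)
  case Nil then show ?case by simp
next
  case (Cons a p)
  then show ?case by (cases p; cases q) auto
qed

lemma walk_appendD2: "walk E (p @ q) \<Longrightarrow> q \<noteq> [] \<Longrightarrow> walk E q"
proof (induction p)
  case Nil then show ?case by simp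
next
  case (Cons a p)
  then show ?case by (cases p; cases q) auto
qed

lemma walk_rev: "sym E \<Longrightarrow> walk E p \<Longrightarrow> walk E (rev p)"
proof (induction p)
  case Nil then show ?case by simp
next
  case (Cons a p)
  show ?case
  proof (cases p)
    case Nil then show ?thesis by simp
  next
    case (Cons b q)
    with Cons.prems have "(a,b) \<in> E" "walk E p" by auto
    then have "(b,a) \<in> E" using Cons.prems(1) by (meson symD)
    have "walk E (rev p)" using Cons.IH Cons.prems \<open>walk E p\<close> by simp
    then have "walk E (rev q @ [b])" using Cons by simp
    moreover have "walk E (b # [a])" using \<open>(b,a) \<in> E\<close> by simp
    ultimately have "walk E (rev q @ b # [a])" by (rule walk_append)
    then show ?thesis using Cons by simp
  qed
qed

lemma walk_imp_distinct_walk: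
  "walk E p \<Longrightarrow> \<exists>q. walk E q \<and> distinct q \<and> hd q = hd p \<and> last q = last p"
proof (induction "length p" arbitrary: p rule: less_induct)
  case less
  show ?case
  proof (cases "distinct p")
    case True then show ?thesis using less.prems by blast
  next
    case False
    then obtain xs ys zs y where p: "p = xs @ [y] @ ys @ [y] @ zs"
      using not_distinct_decomp by blast
    have w1: "walk E (xs @ [y])" using less.prems p walk_appendD1[of E "xs @ [y]"] by simp
    have w2: "walk E (y # zs)" using less.prems p walk_appendD2[of E "xs @ [y] @ ys" "y # zs"] by simp
    have "walk E (xs @ y # zs)" using w1 w2 by (rule walk_append)
    moreover have "length (xs @ y # zs) < length p" using p by simp
    ultimately obtain q where "walk E q \<and> distinct q \<and> hd q = hd (xs @ y # zs) \<and> last q = last (xs @ y # zs)"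
      using less.hyps by blast
    moreover have "hd (xs @ y # zs) = hd p" using p by (cases xs) auto
    moreover have "last (xs @ y # zs) = last p" using p by (cases zs) auto
    ultimately show ?thesis by metis
  qed
qed

lemma gpath_rev: "sym E \<Longrightarrow> gpath E u v p \<Longrightarrow> gpath E v u (rev p)"
  unfolding gpath_def using walk_rev by (auto simp: hd_rev last_rev)

lemma on_path_sym: "sym E \<Longrightarrow> on_path E u w v \<Longrightarrow> on_path E v w u"
  unfolding on_path_def using gpath_rev by fastforce

lemma walk_crosses_cut:
  assumes "walk E p" "hd p \<in> S" "last p \<notin> S"
    and cut: "\<And>x y. (x, y) \<in> E \<Longrightarrow> x \<in> S \<Longrightarrow> y \<notin> S \<Longrightarrow> x = z \<or> y = z"
  shows "z \<in> set p"
  using assms(1-3)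
proof (induction p)
  case Nil then show ?case by simp
next
  case (Cons a p)
  show ?case
  proof (cases p)
    case Nil then show ?thesis using Cons.prems by simp
  next
    case (Cons b q)
    show ?thesis
    proof (cases "b \<in> S")
      case True
      then show ?thesis using Cons.IH Cons.prems \<open>p = b # q\<close> by simp
    next
      case False
      then have "a = z \<or> b = z" using cut[of a b] Cons.prems \<open>p = b # q\<close> by simp
      then show ?thesis using \<open>p = b # q\<close> by auto
    qed
  qed
qed

lemma walk_stays_in_closed:
  assumes "walk E p" "hd p \<in> C" "w \<notin> set p"
    and closed: "\<And>u v. (u, v) \<in> E \<Longrightarrow> u \<in> C \<Longrightarrow> v \<noteq> w \<Longrightarrow> v \<in> C"
  shows "set p \<subseteq> C"
  using assms(1-3)
proof (induction p)
  case Nil then show ?case by simp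
next
  case (Cons a p)
  show ?case
  proof (cases p)
    case Nil then show ?thesis using Cons.prems by simp
  next
    case (Cons b q)
    have "b \<in> C" using closed[of a b] Cons.prems \<open>p = b # q\<close> by auto
    then show ?thesis using Cons.IH Cons.prems \<open>p = b # q\<close> by simp
  qed
qed

text \<open>A path through w would have to enter and leave w through its only neighbour in C.\<close>
lemma gpath_avoids_pendant:
  assumes "sym E" "gpath E x y p" "w \<in> set p" "w \<noteq> x" "w \<noteq> y" "x \<in> C" "y \<in> C"
    and closed: "\<And>u v. (u, v) \<in> E \<Longrightarrow> u \<in> C \<Longrightarrow> v \<noteq> w \<Longrightarrow> v \<in> C"
    and pendant: "\<And>u v. (w, u) \<in> E \<Longrightarrow> (w, v) \<in> E \<Longrightarrow> u \<in> C \<Longrightarrow> v \<in> C \<Longrightarrow> u = v"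
  shows False
proof -
  have wp: "walk E p" and dp: "distinct p" and hp: "hd p = x" and lp: "last p = y"
    using assms(2) unfolding gpath_def by auto
  obtain xs ys where p: "p = xs @ w # ys" using assms(3) by (meson split_list)
  have "xs \<noteq> []" using p hp assms(4) by auto
  have "ys \<noteq> []" using p lp assms(5) by auto
  have w1: "walk E (xs @ [w])" using wp p walk_appendD1[of E "xs @ [w]" ys] by simp
  have w2: "walk E (w # ys)" using wp p walk_appendD2[of E xs "w # ys"] by simp
  have "w \<notin> set xs" "w \<notin> set ys" using dp p by auto
  have "set xs \<subseteq> C"
    by (rule walk_stays_in_closed[OF walk_appendD1[OF w1 \<open>xs \<noteq> []\<close>]])
      (use hp p \<open>xs \<noteq> []\<close> assms(6) \<open>w \<notin> set xs\<close> closed in auto)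
  then have lx: "last xs \<in> C" using \<open>xs \<noteq> []\<close> by auto
  have "set (rev ys) \<subseteq> C"
    by (rule walk_stays_in_closed[OF walk_rev[OF assms(1) walk_ConsD[OF w2 \<open>ys \<noteq> []\<close>]]])
      (use lp p \<open>ys \<noteq> []\<close> assms(7) \<open>w \<notin> set ys\<close> closed in \<open>auto simp: hd_rev\<close>)
  then have hy: "hd ys \<in> C" using \<open>ys \<noteq> []\<close> by auto
  have "walk E (butlast xs @ [last xs, w])" using w1 \<open>xs \<noteq> []\<close>
    by (metis append.assoc append_Cons append_Nil append_butlast_last_id)
  then have "(last xs, w) \<in> E" using walk_appendD2 by fastforce
  then have e1: "(w, last xs) \<in> E" using assms(1) by (meson symD)
  have e2: "(w, hd ys) \<in> E" using w2 \<open>ys \<noteq> []\<close> by (cases ys) auto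
  have "last xs = hd ys" using pendant[OF e1 e2 lx hy] .
  moreover have "last xs \<in> set xs" "hd ys \<in> set ys" using \<open>xs \<noteq> []\<close> \<open>ys \<noteq> []\<close> by auto
  ultimately show False using dp p by auto
qed

subsection \<open>Tight subfamilies of a thin family of triples\<close>

definition tight :: "'a set set \<Rightarrow> bool" where
  "tight F \<longleftrightarrow> F \<noteq> {} \<and> card (\<Union>F) = card F + 2"

lemma card_3_obtain_rest:
  assumes "card s = 3" "p \<in> s" "q \<in> s" "p \<noteq> q"
  obtains r where "s = {p, q, r}" "r \<noteq> p" "r \<noteq> q"
proof -
  have "finite s" using assms(1) by (metis card.infinite zero_neq_numeral)
  then have "card (s - {p, q}) = 1" using assms by (simp add: card_Diff_subset)
  then obtain r where r: "s - {p, q} = {r}" using card_1_singletonE by blast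
  then have "s = {p, q, r}" using assms by auto
  then show thesis using r that by auto
qed

locale thin_triples =
  fixes T :: "'a set set"
  assumes finite_T: "finite T" and thin_T: "thin T" and card_triple: "\<And>s. s \<in> T \<Longrightarrow> card s = 3"
begin

lemma finite_triple: "s \<in> T \<Longrightarrow> finite s"
  using card_triple by (metis card.infinite zero_neq_numeral)

lemma finite_Union_subfamily: "F \<subseteq> T \<Longrightarrow> finite (\<Union>F)"
  using finite_triple finite_T by (meson finite_Union finite_subset subsetD)

lemma finite_subfamily: "F \<subseteq> T \<Longrightarrow> finite F"
  using finite_T finite_subset by blast

lemma card_Union_ge: "F \<subseteq> T \<Longrightarrow> F \<noteq> {} \<Longrightarrow> card F + 2 \<le> card (\<Union>F)"
  using thin_T unfolding thin_def by blast

lemma tight_singleton: "s \<in> T \<Longrightarrow> tight {s}"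
  using card_triple by (simp add: tight_def)

text \<open>The excess card (\<Union>F) - card F is submodular, and thinness bounds it below by 2.\<close>
lemma tight_Un_Int:
  assumes "F \<subseteq> T" "G \<subseteq> T" "tight F" "tight G" "F \<inter> G \<noteq> {}"
  shows "tight (F \<union> G)" "tight (F \<inter> G)" "\<Union>(F \<inter> G) = \<Union>F \<inter> \<Union>G"
proof -
  have fF: "finite F" "finite G" using assms(1,2) finite_subfamily by auto
  have fU: "finite (\<Union>F)" "finite (\<Union>G)" using assms(1,2) finite_Union_subfamily by auto
  have fI: "finite (\<Union>F \<inter> \<Union>G)" using fU by blast
  have c1: "card (\<Union>F \<union> \<Union>G) + card (\<Union>F \<inter> \<Union>G) = card (\<Union>F) + card (\<Union>G)"
    using card_Un_Int[OF fU] by simp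
  have c2: "card (F \<union> G) + card (F \<inter> G) = card F + card G"
    using card_Un_Int[OF fF] by simp
  have u: "\<Union>(F \<union> G) = \<Union>F \<union> \<Union>G" by auto
  have sub: "\<Union>(F \<inter> G) \<subseteq> \<Union>F \<inter> \<Union>G" by auto
  have c3: "card (\<Union>(F \<inter> G)) \<le> card (\<Union>F \<inter> \<Union>G)"
    by (rule card_mono[OF fI sub])
  have t1: "card (F \<union> G) + 2 \<le> card (\<Union>F \<union> \<Union>G)"
    using card_Union_ge[of "F \<union> G"] assms(1,2,5) u by auto
  have t2: "card (F \<inter> G) + 2 \<le> card (\<Union>(F \<inter> G))"
    using card_Union_ge[of "F \<inter> G"] assms(1,5) by auto
  have tF: "card (\<Union>F) = card F + 2" "card (\<Union>G) = card G + 2"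
    using assms(3,4) unfolding tight_def by auto
  have e1: "card (\<Union>F \<union> \<Union>G) = card (F \<union> G) + 2"
    and e2: "card (\<Union>(F \<inter> G)) = card (F \<inter> G) + 2"
    and e3: "card (\<Union>(F \<inter> G)) = card (\<Union>F \<inter> \<Union>G)"
    using c1 c2 c3 t1 t2 tF by linarith+
  show "\<Union>(F \<inter> G) = \<Union>F \<inter> \<Union>G" using card_subset_eq[OF fI sub e3] .
  show "tight (F \<union> G)" "tight (F \<inter> G)" using e1 e2 assms(5) unfolding tight_def u by auto
qed

lemma tight_disjoint_Un:
  assumes "F \<subseteq> T" "G \<subseteq> T" "tight F" "tight G" "F \<inter> G = {}"
  shows "card (\<Union>F \<inter> \<Union>G) \<le> 2" "2 \<le> card (\<Union>F \<inter> \<Union>G) \<Longrightarrow> tight (F \<union> G)"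
proof -
  have fU: "finite (\<Union>F)" "finite (\<Union>G)" using assms(1,2) finite_Union_subfamily by auto
  have c1: "card (\<Union>F \<union> \<Union>G) + card (\<Union>F \<inter> \<Union>G) = card (\<Union>F) + card (\<Union>G)"
    using card_Un_Int[OF fU] by simp
  have c2: "card (F \<union> G) = card F + card G"
    using card_Un_disjoint[OF finite_subfamily[OF assms(1)] finite_subfamily[OF assms(2)] assms(5)] .
  have u: "\<Union>(F \<union> G) = \<Union>F \<union> \<Union>G" by auto
  have t: "card (F \<union> G) + 2 \<le> card (\<Union>F \<union> \<Union>G)"
    using card_Union_ge[of "F \<union> G"] assms(1-3) u unfolding tight_def by auto
  have tF: "card (\<Union>F) = card F + 2" "card (\<Union>G) = card G + 2"
    using assms(3,4) unfolding tight_def by auto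
  show "card (\<Union>F \<inter> \<Union>G) \<le> 2" using c1 c2 t tF by linarith
  show "tight (F \<union> G)" if "2 \<le> card (\<Union>F \<inter> \<Union>G)"
    using c1 c2 t tF u that assms(3) unfolding tight_def by auto
qed

lemma tight_Un_two_common:
  assumes "F \<subseteq> T" "G \<subseteq> T" "tight F" "tight G" "u \<noteq> v" "{u, v} \<subseteq> \<Union>F \<inter> \<Union>G"
  shows "tight (F \<union> G)"
proof (cases "F \<inter> G = {}")
  case True
  have "card {u, v} \<le> card (\<Union>F \<inter> \<Union>G)"
    using card_mono[OF _ assms(6)] finite_Union_subfamily[OF assms(1)] by blast
  then show ?thesis using tight_disjoint_Un(2)[OF assms(1-4) True] assms(5) by simp
qed (use tight_Un_Int[OF assms(1-4)] in blast)

lemma tight_three_common_imp_Int: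
  assumes "F \<subseteq> T" "G \<subseteq> T" "tight F" "tight G" "card C = 3" "C \<subseteq> \<Union>F \<inter> \<Union>G"
  shows "F \<inter> G \<noteq> {}"
proof
  assume "F \<inter> G = {}"
  moreover have "card C \<le> card (\<Union>F \<inter> \<Union>G)"
    using card_mono[OF _ assms(6)] finite_Union_subfamily[OF assms(1)] by blast
  ultimately show False using tight_disjoint_Un(1)[OF assms(1-4)] assms(5) by linarith
qed

lemma tight_not_covers:
  assumes "G \<subseteq> T" "tight G" "s \<in> T" "s \<notin> G"
  shows "\<not> s \<subseteq> \<Union>G"
proof
  assume "s \<subseteq> \<Union>G"
  then have "card (\<Union>(insert s G)) = card (\<Union>G)" by (simp add: Un_absorb1)
  moreover have "card (insert s G) = card G + 1" using assms(4) finite_subfamily[OF assms(1)] by simp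
  moreover have "card (insert s G) + 2 \<le> card (\<Union>(insert s G))"
    using card_Union_ge[of "insert s G"] assms(1,3) by auto
  moreover have "card (\<Union>G) = card G + 2" using assms(2) unfolding tight_def by auto
  ultimately show False by linarith
qed

lemma tight_insert:
  assumes "G \<subseteq> T" "tight G" "s \<in> T" "s \<notin> G" "p \<in> s" "q \<in> s" "p \<noteq> q" "p \<in> \<Union>G" "q \<in> \<Union>G"
  shows "tight (insert s G)"
proof -
  obtain r where s: "s = {p, q, r}"
    using card_3_obtain_rest[OF card_triple[OF assms(3)] assms(5-7)] by blast
  have fU: "finite (\<Union>G)" using finite_Union_subfamily[OF assms(1)] .
  have "card (\<Union>(insert s G)) \<le> card (insert r (\<Union>G))"
    by (rule card_mono) (use fU s assms in auto)
  also have "\<dots> \<le> card (\<Union>G) + 1" using fU by (simp add: card_insert_if)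
  finally have "card (\<Union>(insert s G)) \<le> card (\<Union>G) + 1" .
  moreover have "card (insert s G) = card G + 1" using assms(4) finite_subfamily[OF assms(1)] by simp
  moreover have "card (insert s G) + 2 \<le> card (\<Union>(insert s G))"
    using card_Union_ge[of "insert s G"] assms(1,3) by auto
  moreover have "card (\<Union>G) = card G + 2" using assms(2) unfolding tight_def by auto
  ultimately show ?thesis unfolding tight_def by simp
qed

end

lemma obtain_max_card_subset:
  assumes "finite M" "P F0" "\<And>F. P F \<Longrightarrow> F \<subseteq> M"
  obtains F where "P F" "\<And>G. P G \<Longrightarrow> card G \<le> card F"
proof -
  have "\<forall>G. P G \<longrightarrow> card G < Suc (card M)"
    using assms(1,3) card_mono by (metis le_imp_less_Suc)
  then show thesis using ex_has_greatest_nat[of P F0 card] assms(2) that by blast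
qed

definition lone_partner :: "'a set set \<Rightarrow> 'a \<Rightarrow> 'a \<Rightarrow> bool" where
  "lone_partner M y x \<longleftrightarrow> x \<noteq> y \<and> (\<exists>s\<in>M. y \<in> s \<and> x \<in> s \<and>
      \<not> (\<exists>F. F \<subseteq> M - {s} \<and> tight F \<and> y \<in> \<Union>F \<and> x \<in> \<Union>F))"

lemma lone_partner_in_Union: "lone_partner M y x \<Longrightarrow> x \<in> \<Union>M"
  unfolding lone_partner_def by blast

lemma lone_partner_neq: "lone_partner M y x \<Longrightarrow> x \<noteq> y"
  unfolding lone_partner_def by blast

context thin_triples
begin

lemma lone_partner_lift:
  assumes MT: "M \<subseteq> T" and s: "s \<in> M" "y \<in> s" "c \<in> s" "c \<noteq> y"
    and F: "F \<subseteq> M - {s}" "tight F" "y \<in> \<Union>F" "c \<in> \<Union>F"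
    and F_max: "\<And>G. G \<subseteq> M - {s} \<Longrightarrow> tight G \<Longrightarrow> y \<in> \<Union>G \<Longrightarrow> c \<in> \<Union>G \<Longrightarrow> card G \<le> card F"
    and x: "lone_partner F y x" "x \<noteq> c"
  shows "lone_partner M y x"
proof -
  obtain s' where s': "s' \<in> F" "y \<in> s'" "x \<in> s'" and xy: "x \<noteq> y"
    and lone: "\<not> (\<exists>G. G \<subseteq> F - {s'} \<and> tight G \<and> y \<in> \<Union>G \<and> x \<in> \<Union>G)"
    using x(1) unfolding lone_partner_def by blast
  have FT: "F \<subseteq> T" using F(1) MT by blast
  have "False" if G: "G \<subseteq> M - {s'}" "tight G" "y \<in> \<Union>G" "x \<in> \<Union>G" for G
  proof -
    have GT: "G \<subseteq> T" using G(1) MT by blast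
    have yx: "{y, x} \<subseteq> \<Union>G \<inter> \<Union>F" using G s' by blast
    show False
    proof (cases "G \<inter> F = {}")
      case False
      have "G \<inter> F \<subseteq> F - {s'}" using G(1) by blast
      moreover have "tight (G \<inter> F)" by (rule tight_Un_Int(2)[OF GT FT G(2) F(2) False])
      moreover have "y \<in> \<Union>(G \<inter> F)" "x \<in> \<Union>(G \<inter> F)"
        using tight_Un_Int(3)[OF GT FT G(2) F(2) False] yx by auto
      ultimately show False using lone by blast
    next
      case True
      show False
      proof (cases "s \<in> G")
        case False
        have "tight (G \<union> F)" using tight_Un_two_common[OF GT FT G(2) F(2) xy[symmetric] yx] .
        moreover have "G \<union> F \<subseteq> M - {s}" using G(1) F(1) False by blast
        ultimately have "card (G \<union> F) \<le> card F" using F_max F(3,4) by blast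
        moreover have "card (G \<union> F) = card G + card F"
          using card_Un_disjoint[OF finite_subfamily[OF GT] finite_subfamily[OF FT] True] .
        moreover have "card G > 0" using G(2) finite_subfamily[OF GT] unfolding tight_def by auto
        ultimately show False by linarith
      next
        case True
        then have "{y, x, c} \<subseteq> \<Union>G \<inter> \<Union>F" using yx s(3) F(4) by blast
        moreover have "card {y, x, c} = 3" using xy x(2) s(4) by auto
        ultimately have "G \<inter> F \<noteq> {}" by (rule tight_three_common_imp_Int[OF GT FT G(2) F(2), rotated])
        then show False using \<open>G \<inter> F = {}\<close> by blast
      qed
    qed
  qed
  then have "\<not> (\<exists>G. G \<subseteq> M - {s'} \<and> tight G \<and> y \<in> \<Union>G \<and> x \<in> \<Union>G)" by blast
  moreover have "s' \<in> M" using s'(1) F(1) by blast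
  ultimately show ?thesis unfolding lone_partner_def using xy s'(2,3) by blast
qed

lemma lone_partner_toward:
  assumes MT: "M \<subseteq> T" and s: "s \<in> M" "s = {y, c, d}" "c \<noteq> d" "c \<noteq> y"
    and IH: "\<And>F. F \<subseteq> M - {s} \<Longrightarrow> tight F \<Longrightarrow> y \<in> \<Union>F \<Longrightarrow>
      \<exists>x1 x2. x1 \<noteq> x2 \<and> lone_partner F y x1 \<and> lone_partner F y x2"
  shows "\<exists>g. lone_partner M y g \<and> g \<noteq> d \<and>
    (g \<noteq> c \<longrightarrow> (\<exists>F. F \<subseteq> M - {s} \<and> tight F \<and> y \<in> \<Union>F \<and> c \<in> \<Union>F \<and> g \<in> \<Union>F))"
proof -
  define W where "W F \<longleftrightarrow> F \<subseteq> M - {s} \<and> tight F \<and> y \<in> \<Union>F \<and> c \<in> \<Union>F" for F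
  have ys: "y \<in> s" "c \<in> s" and sT: "s \<in> T" using s MT by auto
  show ?thesis
  proof (cases "\<exists>F. W F")
    case False
    then have "lone_partner M y c" using s(1,4) ys unfolding lone_partner_def W_def by blast
    then show ?thesis using s(3) by blast
  next
    case True
    then obtain F0 where "W F0" by blast
    moreover have "\<And>G. W G \<Longrightarrow> G \<subseteq> M" unfolding W_def by blast
    ultimately obtain F where WF: "W F" and F_max: "\<And>G. W G \<Longrightarrow> card G \<le> card F"
      by (rule obtain_max_card_subset[OF finite_subfamily[OF MT]]) blast+
    have F: "F \<subseteq> M - {s}" "tight F" "y \<in> \<Union>F" "c \<in> \<Union>F" using WF unfolding W_def by auto
    have FT: "F \<subseteq> T" using F(1) MT by blast
    obtain x1 x2 where "x1 \<noteq> x2" "lone_partner F y x1" "lone_partner F y x2" using IH[OF F(1-3)] by blast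
    then obtain x where x: "lone_partner F y x" "x \<noteq> c" by metis
    have "lone_partner M y x"
      by (rule lone_partner_lift[OF MT s(1) ys(1,2) s(4) F _ x]) (use F_max in \<open>simp add: W_def\<close>)
    moreover have "x \<in> \<Union>F" using lone_partner_in_Union[OF x(1)] .
    moreover have "d \<notin> \<Union>F"
    proof
      assume "d \<in> \<Union>F"
      then have "s \<subseteq> \<Union>F" using s(2) F(3,4) by blast
      then show False using tight_not_covers[OF FT F(2) sT] F(1) by blast
    qed
    ultimately show ?thesis using F by blast
  qed
qed

lemma two_lone_partners:
  assumes "M \<subseteq> T" "tight M" "y \<in> \<Union>M"
  shows "\<exists>x1 x2. x1 \<noteq> x2 \<and> lone_partner M y x1 \<and> lone_partner M y x2"
  using assms
proof (induction "card M" arbitrary: M rule: less_induct)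
  case less
  note MT = less.prems(1)
  obtain s where sM: "s \<in> M" and ys: "y \<in> s" using less.prems(3) by blast
  have sT: "s \<in> T" using sM MT by blast
  obtain a b where s_eq: "s = {y, a, b}" and ab: "a \<noteq> b" "a \<noteq> y" "b \<noteq> y"
    using card_triple[OF sT] ys unfolding card_3_iff by auto
  have IH: "\<exists>x1 x2. x1 \<noteq> x2 \<and> lone_partner F y x1 \<and> lone_partner F y x2"
    if "F \<subseteq> M - {s}" "tight F" "y \<in> \<Union>F" for F
  proof (rule less.hyps)
    show "card F < card M" using psubset_card_mono[OF finite_subfamily[OF MT]] that(1) sM by blast
  qed (use that MT in auto)
  have "s = {y, b, a}" using s_eq by auto
  from lone_partner_toward[OF MT sM this _ ab(3) IH] ab(1)
  obtain gb where gb: "lone_partner M y gb" "gb \<noteq> a"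
    "gb \<noteq> b \<longrightarrow> (\<exists>F. F \<subseteq> M - {s} \<and> tight F \<and> y \<in> \<Union>F \<and> b \<in> \<Union>F \<and> gb \<in> \<Union>F)"
    by blast
  from lone_partner_toward[OF MT sM s_eq ab(1,2) IH]
  obtain ga where ga: "lone_partner M y ga" "ga \<noteq> b"
    "ga \<noteq> a \<longrightarrow> (\<exists>F. F \<subseteq> M - {s} \<and> tight F \<and> y \<in> \<Union>F \<and> a \<in> \<Union>F \<and> ga \<in> \<Union>F)"
    by blast
  have "ga \<noteq> gb"
  proof
    assume same: "ga = gb"
    then have "ga \<noteq> a" "ga \<noteq> b" using ga(2) gb(2) by auto
    then obtain Fa Fb where Fa: "Fa \<subseteq> M - {s}" "tight Fa" "y \<in> \<Union>Fa" "a \<in> \<Union>Fa" "ga \<in> \<Union>Fa"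
      and Fb: "Fb \<subseteq> M - {s}" "tight Fb" "y \<in> \<Union>Fb" "b \<in> \<Union>Fb" "ga \<in> \<Union>Fb"
      using ga(3) gb(3) same by blast
    have FT: "Fa \<subseteq> T" "Fb \<subseteq> T" "Fa \<union> Fb \<subseteq> T" using Fa(1) Fb(1) MT by auto
    have "{y, ga} \<subseteq> \<Union>Fa \<inter> \<Union>Fb" using Fa(3,5) Fb(3,5) by blast
    then have "tight (Fa \<union> Fb)"
      using tight_Un_two_common[OF FT(1,2) Fa(2) Fb(2)] lone_partner_neq[OF ga(1)] by blast
    moreover have "s \<notin> Fa \<union> Fb" using Fa(1) Fb(1) by blast
    ultimately have "\<not> s \<subseteq> \<Union>(Fa \<union> Fb)" by (rule tight_not_covers[OF FT(3) _ sT])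
    moreover have "s \<subseteq> \<Union>(Fa \<union> Fb)" using Fa(3,4) Fb(4) s_eq by auto
    ultimately show False by contradiction
  qed
  then show ?case using ga gb by blast
qed

end

definition triples_through :: "'a set set \<Rightarrow> 'a \<Rightarrow> 'a \<Rightarrow> 'a set set" where
  "triples_through T y x = {t \<in> T. y \<in> t \<and> x \<in> t}"

text \<open>The condition under which identifying y with x, after discarding the (at most one)
  triple through both, keeps the family thin.\<close>
definition mergeable :: "'a set set \<Rightarrow> 'a \<Rightarrow> 'a \<Rightarrow> bool" where
  "mergeable T y x \<longleftrightarrow> x \<noteq> y \<and> card (triples_through T y x) \<le> 1 \<and>
     (\<forall>T' \<subseteq> T - triples_through T y x. T' \<noteq> {} \<longrightarrow> y \<in> \<Union>T' \<longrightarrow> x \<in> \<Union>T'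
        \<longrightarrow> card T' + 3 \<le> card (\<Union>T'))"

context thin_triples
begin

lemma lone_partner_mergeable:
  assumes MT: "M \<subseteq> T"
    and M_max: "\<And>F. F \<subseteq> T \<Longrightarrow> tight F \<Longrightarrow> F \<inter> M \<noteq> {} \<Longrightarrow> F \<subseteq> M"
    and "lone_partner M y x"
  shows "mergeable T y x"
proof -
  obtain s where sM: "s \<in> M" and ys: "y \<in> s" and xs: "x \<in> s" and xy: "x \<noteq> y"
    and lone: "\<not> (\<exists>F. F \<subseteq> M - {s} \<and> tight F \<and> y \<in> \<Union>F \<and> x \<in> \<Union>F)"
    using assms(3) unfolding lone_partner_def by blast
  have sT: "s \<in> T" using sM MT by blast
  have absorbed: "F - {s} \<subseteq> M - {s}" if "F \<subseteq> T" "tight F" "s \<in> F" for F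
    using M_max[OF that(1,2)] that(3) sM by blast
  have "triples_through T y x \<subseteq> {s}"
  proof
    fix t assume t: "t \<in> triples_through T y x"
    then have tT: "t \<in> T" unfolding triples_through_def by blast
    show "t \<in> {s}"
    proof (rule ccontr)
      assume ts: "t \<notin> {s}"
      have "tight (insert t {s})"
        by (rule tight_insert[of "{s}" t y x]) (use sT tight_singleton tT ts xy ys xs t in
            \<open>auto simp: triples_through_def\<close>)
      then have "{t} \<subseteq> M - {s}" using absorbed[of "insert t {s}"] sT tT ts by blast
      then show False using lone tight_singleton[OF tT] t unfolding triples_through_def by blast
    qed
  qed
  then have "card (triples_through T y x) \<le> 1" using card_mono[of "{s}"] by simp
  moreover have "card T' + 3 \<le> card (\<Union>T')"
    if T': "T' \<subseteq> T - triples_through T y x" "T' \<noteq> {}" "y \<in> \<Union>T'" "x \<in> \<Union>T'" for T'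
  proof (rule ccontr)
    have T'T: "T' \<subseteq> T" and sT': "s \<notin> T'" using T'(1) sT ys xs unfolding triples_through_def by auto
    assume "\<not> card T' + 3 \<le> card (\<Union>T')"
    then have "tight T'" using card_Union_ge[OF T'T T'(2)] T'(2) unfolding tight_def by linarith
    moreover have "tight (insert s T')"
      by (rule tight_insert[OF T'T _ sT sT' ys xs]) (use xy T' calculation in auto)
    then have "T' \<subseteq> M - {s}" using absorbed[of "insert s T'"] sT T'T sT' by blast
    ultimately show False using lone T' by blast
  qed
  ultimately show ?thesis unfolding mergeable_def using xy by blast
qed

lemma mergeable_partner_exists:
  assumes "y \<in> \<Union>T"
  obtains x where "x \<in> \<Union>T" "mergeable T y x"
proof -
  obtain s0 where s0: "s0 \<in> T" "y \<in> s0" using assms by blast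
  define P where "P F \<longleftrightarrow> F \<subseteq> T \<and> tight F \<and> s0 \<in> F" for F
  obtain M where PM: "P M" and M_max_card: "\<And>F. P F \<Longrightarrow> card F \<le> card M"
    using obtain_max_card_subset[of T P "{s0}"] finite_T s0(1) tight_singleton
    unfolding P_def by blast
  have MT: "M \<subseteq> T" and tM: "tight M" and s0M: "s0 \<in> M" using PM unfolding P_def by auto
  have M_max: "F \<subseteq> M" if "F \<subseteq> T" "tight F" "F \<inter> M \<noteq> {}" for F
  proof -
    have "P (F \<union> M)" using tight_Un_Int(1)[OF that(1) MT that(2) tM that(3)] that(1) MT s0M
      unfolding P_def by blast
    then have "card (F \<union> M) \<le> card M" using M_max_card by blast
    then show ?thesis using card_subset_eq[of "F \<union> M" M] finite_subfamily[of "F \<union> M"] that(1) MT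
      by (metis Un_upper2 card_mono le_antisym le_sup_iff)
  qed
  obtain x where x: "lone_partner M y x" using two_lone_partners[OF MT tM] s0 s0M by blast
  show thesis
  proof
    show "x \<in> \<Union>T" using lone_partner_in_Union[OF x] MT by blast
    show "mergeable T y x" using lone_partner_mergeable[OF MT M_max x] by blast
  qed
qed

lemma obtain_mergeable_partner:
  assumes "\<Union>T \<subseteq> Y" "y \<in> Y" "Y \<noteq> {y}"
  obtains x where "x \<in> Y" "mergeable T y x"
proof (cases "y \<in> \<Union>T")
  case True
  then show thesis using mergeable_partner_exists that assms(1) by blast
next
  case False
  obtain x where "x \<in> Y" "x \<noteq> y" using assms(2,3) by blast
  moreover have "triples_through T y x = {}" using False unfolding triples_through_def by blast
  then have "mergeable T y x" using \<open>x \<noteq> y\<close> False unfolding mergeable_def by auto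
  ultimately show thesis using that by blast
qed

end

subsection \<open>Orders in which distinct triples have distinct middle elements\<close>

definition middle :: "('a \<Rightarrow> nat) \<Rightarrow> 'a set \<Rightarrow> 'a \<Rightarrow> bool" where
  "middle r s m \<longleftrightarrow> m \<in> s \<and> (\<exists>p\<in>s. \<exists>q\<in>s. r p < r m \<and> r m < r q)"

definition distinct_middles :: "('a \<Rightarrow> nat) \<Rightarrow> 'a set set \<Rightarrow> bool" where
  "distinct_middles r T \<longleftrightarrow> (\<forall>s1\<in>T. \<forall>s2\<in>T. \<forall>m. middle r s1 m \<longrightarrow> middle r s2 m \<longrightarrow> s1 = s2)"

definition contract :: "'a \<Rightarrow> 'a \<Rightarrow> 'a set \<Rightarrow> 'a set" where
  "contract y x s = (if y \<in> s then insert x (s - {y}) else s)"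

definition prepend :: "'a \<Rightarrow> ('a \<Rightarrow> nat) \<Rightarrow> 'a \<Rightarrow> nat" where
  "prepend y r z = (if z = y then 0 else Suc (r z))"

lemma contract_subset: "contract y x s \<subseteq> insert x (s - {y})"
  unfolding contract_def by auto

lemma Union_contract_supset: "\<Union>T - {y} \<subseteq> \<Union>(contract y x ` T)"
proof
  fix z assume "z \<in> \<Union>T - {y}"
  then obtain s where "s \<in> T" "z \<in> s" "z \<noteq> y" by blast
  then have "z \<in> contract y x s" unfolding contract_def by auto
  then show "z \<in> \<Union>(contract y x ` T)" using \<open>s \<in> T\<close> by blast
qed

lemma card_contract:
  assumes "card s = 3" "\<not> (y \<in> s \<and> x \<in> s)"
  shows "card (contract y x s) = 3"
proof (cases "y \<in> s")
  case True
  have "finite s" using assms(1) by (metis card.infinite zero_neq_numeral)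
  then show ?thesis using True assms unfolding contract_def by (simp add: card_Diff_singleton)
qed (simp add: contract_def assms(1))

lemma bij_betw_prepend:
  assumes "bij_betw r (Y - {y}) {..<n}" "y \<in> Y"
  shows "bij_betw (prepend y r) Y {..<Suc n}"
proof -
  have "prepend y r ` (Y - {y}) = Suc ` r ` (Y - {y})"
    unfolding image_image by (rule image_cong) (auto simp: prepend_def)
  then have "prepend y r ` Y = insert 0 (Suc ` {..<n})"
    using assms insert_Diff[OF assms(2)] unfolding bij_betw_def
    by (metis image_insert prepend_def)
  moreover have "inj_on (prepend y r) Y"
    using assms(1) unfolding bij_betw_def inj_on_def prepend_def by auto
  ultimately show ?thesis unfolding bij_betw_def lessThan_Suc_eq_insert_0 by blast
qed

lemma middle_prepend_contract:
  assumes "middle (prepend y r) s m" "\<not> (y \<in> s \<and> x \<in> s)" "r x = 0"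
    and "\<And>z. z \<in> s \<Longrightarrow> z \<noteq> y \<Longrightarrow> z \<noteq> x \<Longrightarrow> r z \<noteq> 0"
  shows "middle r (contract y x s) m"
proof -
  obtain p q where ms: "m \<in> s" and ps: "p \<in> s" and qs: "q \<in> s"
    and pm: "prepend y r p < prepend y r m" and mq: "prepend y r m < prepend y r q"
    using assms(1) unfolding middle_def by blast
  have my: "m \<noteq> y" and qy: "q \<noteq> y" using pm mq unfolding prepend_def by auto
  have rmq: "r m < r q" using mq my qy unfolding prepend_def by simp
  have mq': "m \<in> contract y x s" "q \<in> contract y x s"
    using ms qs my qy unfolding contract_def by auto
  show ?thesis
  proof (cases "p = y")
    case True
    have "m \<noteq> x" using assms(2) True ps ms by blast
    then have "r x < r m" using assms(3) assms(4)[OF ms my] by simp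
    moreover have "x \<in> contract y x s" using True ps unfolding contract_def by simp
    ultimately show ?thesis using mq' rmq unfolding middle_def by blast
  next
    case False
    then have "p \<in> contract y x s" "r p < r m" using ps pm my unfolding contract_def prepend_def by auto
    then show ?thesis using mq' rmq unfolding middle_def by blast
  qed
qed

lemma middle_prepend_through:
  assumes "middle (prepend y r) {y, x, z} m" "r x = 0" "r z \<noteq> 0" "x \<noteq> y" "z \<noteq> y"
  shows "m = x"
proof -
  obtain p q where m: "m \<in> {y, x, z}" and pq: "p \<in> {y, x, z}" "q \<in> {y, x, z}"
    and less: "prepend y r p < prepend y r m" "prepend y r m < prepend y r q"
    using assms(1) unfolding middle_def by blast
  have "m \<noteq> y" using less(1) unfolding prepend_def by auto
  moreover have "m \<noteq> z" using pq(2) less(2) assms(2-5) unfolding prepend_def by auto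
  ultimately show ?thesis using m by blast
qed

lemma middle_prepend_first:
  assumes "middle (prepend y r) s x" "r x = 0" "x \<noteq> y"
  shows "y \<in> s"
proof -
  obtain p where "p \<in> s" "prepend y r p < prepend y r x" using assms(1) unfolding middle_def by blast
  then show ?thesis using assms(2,3) unfolding prepend_def by (auto split: if_splits)
qed

context thin_triples
begin

lemma inj_on_contract:
  assumes "mergeable T y x"
  shows "inj_on (contract y x) (T - triples_through T y x)"
proof -
  let ?D = "triples_through T y x"
  have no_mixed: False
    if s: "s \<in> T - ?D" "s' \<in> T - ?D" "y \<in> s" "y \<notin> s'" "insert x (s - {y}) = s'" for s s'
  proof -
    have "{s, s'} \<subseteq> T - ?D" "y \<in> \<Union>{s, s'}" "x \<in> \<Union>{s, s'}" using s by auto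
    then have "card {s, s'} + 3 \<le> card (\<Union>{s, s'})" using assms unfolding mergeable_def by blast
    moreover have "s \<noteq> s'" using s(3,4) by blast
    then have "card {s, s'} = 2" by simp
    moreover have "\<Union>{s, s'} = insert x s" using s(3,5) by auto
    moreover have "card (insert x s) \<le> 4"
      using card_triple[of s] finite_triple[of s] s(1) by (simp add: card_insert_if)
    ultimately show False by simp
  qed
  show ?thesis
  proof (rule inj_onI)
    fix s1 s2 assume s: "s1 \<in> T - ?D" "s2 \<in> T - ?D" and eq: "contract y x s1 = contract y x s2"
    show "s1 = s2"
    proof (cases "y \<in> s1"; cases "y \<in> s2")
      assume y: "y \<in> s1" "y \<in> s2"
      then have "x \<notin> s1" "x \<notin> s2" using s unfolding triples_through_def by auto
      moreover have "insert x (s1 - {y}) = insert x (s2 - {y})" using eq y unfolding contract_def by simp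
      ultimately have "s1 - {y} = s2 - {y}" by (metis Diff_iff insert_Diff1 insert_absorb2 insert_ident singletonD)
      then show ?thesis using y by (metis insert_Diff)
    next
      assume "y \<in> s1" "y \<notin> s2"
      then show ?thesis using no_mixed[OF s] eq unfolding contract_def by simp
    next
      assume "y \<notin> s1" "y \<in> s2"
      then show ?thesis using no_mixed[OF s(2,1)] eq unfolding contract_def by simp
    qed (use eq in \<open>simp add: contract_def\<close>)
  qed
qed

lemma card_Union_contract_ge:
  assumes "mergeable T y x" "T' \<subseteq> T - triples_through T y x" "T' \<noteq> {}"
  shows "card T' + 2 \<le> card (\<Union>(contract y x ` T'))"
proof -
  have T'T: "T' \<subseteq> T" using assms(2) by blast
  have fin: "finite (\<Union>T')" using finite_Union_subfamily[OF T'T] .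
  have "\<Union>(contract y x ` T') \<subseteq> insert x (\<Union>T')" using contract_subset[of y x] by blast
  then have fin': "finite (\<Union>(contract y x ` T'))" using fin finite_subset by blast
  have thin: "card T' + 2 \<le> card (\<Union>T')" using card_Union_ge[OF T'T assms(3)] .
  have sup: "\<Union>T' - {y} \<subseteq> \<Union>(contract y x ` T')" by (rule Union_contract_supset)
  show ?thesis
  proof (cases "y \<in> \<Union>T'")
    case False
    then show ?thesis using thin card_mono[OF fin' sup] by simp
  next
    case True
    then obtain s where "s \<in> T'" "y \<in> s" by blast
    then have "x \<in> \<Union>(contract y x ` T')" unfolding contract_def by force
    then have sup': "insert x (\<Union>T' - {y}) \<subseteq> \<Union>(contract y x ` T')" using sup by blast
    show ?thesis
    proof (cases "x \<in> \<Union>T'")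
      case True
      then have "card T' + 3 \<le> card (\<Union>T')"
        using assms \<open>y \<in> \<Union>T'\<close> unfolding mergeable_def by blast
      then show ?thesis using card_mono[OF fin' sup] \<open>y \<in> \<Union>T'\<close> fin by simp
    next
      case False
      moreover have "card (\<Union>T') > 0" using \<open>y \<in> \<Union>T'\<close> fin card_gt_0_iff by blast
      ultimately have "card (insert x (\<Union>T' - {y})) = card (\<Union>T')"
        using \<open>y \<in> \<Union>T'\<close> fin by (simp add: card_insert_if)
      then show ?thesis using thin card_mono[OF fin' sup'] by simp
    qed
  qed
qed

lemma thin_contract:
  assumes "mergeable T y x"
  shows "thin (contract y x ` (T - triples_through T y x))"
  unfolding thin_def
proof (intro allI impI)
  fix T'' assume T'': "T'' \<subseteq> contract y x ` (T - triples_through T y x) \<and> T'' \<noteq> {}"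
  define T' where "T' = {s \<in> T - triples_through T y x. contract y x s \<in> T''}"
  have T'_sub: "T' \<subseteq> T - triples_through T y x" and T''_eq: "T'' = contract y x ` T'"
    using T'' unfolding T'_def by blast+
  have "card T'' = card T'"
    unfolding T''_eq by (rule card_image[OF inj_on_subset[OF inj_on_contract[OF assms] T'_sub]])
  moreover have "T' \<noteq> {}" using T'' T''_eq by blast
  ultimately show "card T'' + 2 \<le> card (\<Union>T'')"
    using card_Union_contract_ge[OF assms T'_sub] T''_eq by simp
qed

lemma distinct_middles_prepend:
  assumes merge: "mergeable T y x" and "\<Union>T \<subseteq> Y" "x \<in> Y"
    and r: "inj_on r (Y - {y})" "r x = 0"
    and dm: "distinct_middles r (contract y x ` (T - triples_through T y x))"
  shows "distinct_middles (prepend y r) T"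
  unfolding distinct_middles_def
proof (intro ballI allI impI)
  let ?D = "triples_through T y x"
  have xy: "x \<noteq> y" using merge unfolding mergeable_def by blast
  have r_pos: "r z \<noteq> 0" if "z \<in> s" "s \<in> T" "z \<noteq> y" "z \<noteq> x" for z s
  proof -
    have "z \<in> Y - {y}" "x \<in> Y - {y}" using that assms(2,3) xy by auto
    then show ?thesis using inj_onD[OF r(1), of z x] r(2) that(4) by auto
  qed
  have through: "m = x" if "s \<in> ?D" "middle (prepend y r) s m" for s m
  proof -
    have s: "s \<in> T" "y \<in> s" "x \<in> s" using that(1) unfolding triples_through_def by auto
    obtain z where z: "s = {y, x, z}" "z \<noteq> y" "z \<noteq> x"
      using card_3_obtain_rest[OF card_triple[OF s(1)] s(2,3) xy[symmetric]] by blast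
    then show ?thesis
      using middle_prepend_through[of y r x z m] that(2) r(2) r_pos[OF _ s(1) z(2,3)] xy s(3) by simp
  qed
  have lifted: "middle r (contract y x s) m" if "s \<in> T - ?D" "middle (prepend y r) s m" for s m
    by (rule middle_prepend_contract[OF that(2) _ r(2)])
      (use that(1) r_pos in \<open>auto simp: triples_through_def\<close>)
  fix s1 s2 m assume s: "s1 \<in> T" "s2 \<in> T" and m: "middle (prepend y r) s1 m" "middle (prepend y r) s2 m"
  have to_through: "s \<in> ?D" if "s \<in> T" "middle (prepend y r) s x" for s
  proof -
    have "x \<in> s" using that(2) unfolding middle_def by blast
    then show ?thesis using middle_prepend_first[OF that(2) r(2) xy] that(1)
      unfolding triples_through_def by blast
  qed
  show "s1 = s2"
  proof (cases "s1 \<in> ?D \<or> s2 \<in> ?D")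
    case True
    then have "m = x" using through m by blast
    then have "s1 \<in> ?D" "s2 \<in> ?D" using to_through s m by auto
    moreover have "card ?D \<le> 1" "finite ?D"
      using merge finite_T unfolding mergeable_def triples_through_def by auto
    ultimately show ?thesis using card_le_Suc0_iff_eq[of ?D] by simp
  next
    case False
    then have "middle r (contract y x s1) m" "middle r (contract y x s2) m"
      using lifted s m by auto
    moreover have "contract y x s1 \<in> contract y x ` (T - ?D)" "contract y x s2 \<in> contract y x ` (T - ?D)"
      using False s by auto
    ultimately have "contract y x s1 = contract y x s2"
      using dm unfolding distinct_middles_def by blast
    then show ?thesis using inj_onD[OF inj_on_contract[OF merge]] False s by blast
  qed
qed

end

lemma distinct_middles_order_exists:
  assumes "finite Y" "T \<subseteq> {s. s \<subseteq> Y \<and> card s = 3}" "thin T" "y \<in> Y"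
  shows "\<exists>r. bij_betw r Y {..<card Y} \<and> r y = 0 \<and> distinct_middles r T"
  using assms
proof (induction "card Y" arbitrary: Y T y rule: less_induct)
  case less
  have "T \<subseteq> Pow Y" using less.prems(2) by blast
  then have "finite T" using less.prems(1) finite_subset by blast
  interpret thin_triples T
    by unfold_locales (use \<open>finite T\<close> less.prems(2,3) in auto)
  show ?case
  proof (cases "Y = {y}")
    case True
    have "T = {}"
    proof (rule ccontr)
      assume "T \<noteq> {}"
      then obtain s where "s \<in> T" by blast
      then have "card s \<le> card {y}" using less.prems(2) True card_mono[of "{y}" s] by blast
      then show False using card_triple[OF \<open>s \<in> T\<close>] by simp
    qed
    then show ?thesis using True by (intro exI[of _ "\<lambda>_. 0"]) (auto simp: distinct_middles_def bij_betw_def)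
  next
    case False
    obtain x where x: "x \<in> Y" "mergeable T y x"
      using obtain_mergeable_partner[of Y y] less.prems(2,4) False by blast
    let ?T = "contract y x ` (T - triples_through T y x)"
    have xy: "x \<noteq> y" using x(2) unfolding mergeable_def by blast
    have "?T \<subseteq> {s. s \<subseteq> Y - {y} \<and> card s = 3}"
      using less.prems(2) contract_subset[of y x] card_contract[of _ y x] x(1) xy
      unfolding triples_through_def by fastforce
    moreover have "card (Y - {y}) < card Y" using card_Diff1_less[OF less.prems(1,4)] .
    ultimately obtain r where r: "bij_betw r (Y - {y}) {..<card (Y - {y})}" "r x = 0" "distinct_middles r ?T"
      using less.hyps[OF _ _ _ thin_contract[OF x(2)]] less.prems(1) x(1) xy by blast
    have "bij_betw (prepend y r) Y {..<card Y}"
      using bij_betw_prepend[OF r(1) less.prems(4)] card_Suc_Diff1[OF less.prems(1,4)] by simp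
    moreover have "distinct_middles (prepend y r) T"
      by (rule distinct_middles_prepend[OF x(2) _ x(1) _ r(2,3)])
        (use less.prems(2) r(1) in \<open>auto simp: bij_betw_def\<close>)
    ultimately show ?thesis by (intro exI[of _ "prepend y r"]) (simp add: prepend_def)
  qed
qed

subsection \<open>Trees given by a parent function\<close>

definition parent_edges :: "nat set \<Rightarrow> (nat \<Rightarrow> nat) \<Rightarrow> (nat \<times> nat) set" where
  "parent_edges V par =
     {(u, v). u \<in> V \<and> v \<in> V \<and> ((u \<noteq> 0 \<and> v = par u) \<or> (v \<noteq> 0 \<and> u = par v))}"

locale parent_tree =
  fixes V :: "nat set" and par :: "nat \<Rightarrow> nat"
  assumes finite_V: "finite V" and root_in_V: "0 \<in> V"
    and par_in_V: "v \<in> V \<Longrightarrow> v \<noteq> 0 \<Longrightarrow> par v \<in> V"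
    and par_less: "v \<in> V \<Longrightarrow> v \<noteq> 0 \<Longrightarrow> par v < v"
begin

abbreviation E :: "(nat \<times> nat) set" where "E \<equiv> parent_edges V par"

lemma edge_iff: "(u, v) \<in> E \<longleftrightarrow> u \<in> V \<and> v \<in> V \<and> ((u \<noteq> 0 \<and> v = par u) \<or> (v \<noteq> 0 \<and> u = par v))"
  unfolding parent_edges_def by auto

lemma edge_par: "v \<in> V \<Longrightarrow> v \<noteq> 0 \<Longrightarrow> (v, par v) \<in> E"
  using par_in_V edge_iff by blast

lemma sym_E: "sym E"
  unfolding sym_def edge_iff by blast

lemma edge_up: "(u, v) \<in> E \<Longrightarrow> u < v \<Longrightarrow> u = par v"
  using edge_iff par_less by fastforce

lemma walk_to_root: "v \<in> V \<Longrightarrow> \<exists>p. walk E p \<and> hd p = v \<and> last p = 0"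
proof (induction v rule: less_induct)
  case (less v)
  show ?case
  proof (cases "v = 0")
    case True then show ?thesis by (intro exI[of _ "[0]"]) simp
  next
    case False
    then obtain p where p: "walk E p" "hd p = par v" "last p = 0"
      using less.IH[of "par v"] par_less par_in_V less.prems by blast
    have "p \<noteq> []" using p by auto
    then have "walk E (v # p)" using p edge_par[OF less.prems False] by (cases p) auto
    then show ?thesis using p \<open>p \<noteq> []\<close> by (intro exI[of _ "v # p"]) simp
  qed
qed

lemma connected: "u \<in> V \<Longrightarrow> v \<in> V \<Longrightarrow> \<exists>p. gpath E u v p"
proof -
  assume u: "u \<in> V" and v: "v \<in> V"
  obtain pu where pu: "walk E pu" "hd pu = u" "last pu = 0" using walk_to_root[OF u] by blast
  obtain pv where pv: "walk E pv" "hd pv = v" "last pv = 0" using walk_to_root[OF v] by blast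
  have nu: "pu \<noteq> []" and nv: "pv \<noteq> []" using pu pv by auto
  have r: "walk E (rev pv)" using walk_rev[OF sym_E pv(1)] .
  have r0: "rev pv = 0 # tl (rev pv)" using nv pv(3)
    by (metis hd_rev list.collapse rev_is_Nil_conv)
  have pu0: "pu = butlast pu @ [0]" using nu pu(3) by (metis append_butlast_last_id)
  have "walk E (butlast pu @ 0 # tl (rev pv))"
    by (rule walk_append) (use pu(1) pu0 r r0 in metis)+
  moreover have "hd (butlast pu @ 0 # tl (rev pv)) = u"
    using pu(2) pu0 by (metis hd_append list.sel(1))
  moreover have "last (butlast pu @ 0 # tl (rev pv)) = v"
    using r0 pv(2) nv by (metis last_appendR last_rev list.distinct(1))
  ultimately show ?thesis unfolding gpath_def using walk_imp_distinct_walk by metis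
qed

text \<open>The largest vertex of a cycle has two distinct neighbours on it; both are smaller,
  so both would be its parent.\<close>
lemma no_cycle: "\<not> has_cycle E"
proof
  assume "has_cycle E"
  then obtain p where wp: "walk E p" and dp: "distinct p" and L3: "length p \<ge> 3"
    and cl: "(last p, hd p) \<in> E"
    unfolding has_cycle_def by blast
  define L where "L = length p"
  have ne: "p \<noteq> []" using L3 by auto
  have wE: "(p ! j, p ! Suc j) \<in> E" if "j < L - 1" for j using wp that unfolding walk_def L_def by blast
  have lastp: "last p = p ! (L - 1)" using ne unfolding L_def by (simp add: last_conv_nth)
  have hdp: "hd p = p ! 0" using ne by (simp add: hd_conv_nth)
  define M where "M = Max (set p)"
  have "M \<in> set p" unfolding M_def using ne by simp
  then obtain i where iL: "i < L" and pi: "p ! i = M" unfolding L_def by (metis in_set_conv_nth)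
  define ip where "ip = (if i = 0 then L - 1 else i - 1)"
  define iN where "iN = (if i = L - 1 then 0 else i + 1)"
  have e1: "(p ! ip, p ! i) \<in> E"
  proof (cases "i = 0")
    case True then show ?thesis using cl lastp hdp unfolding ip_def by simp
  next
    case False then show ?thesis using wE[of "i - 1"] iL unfolding ip_def by simp
  qed
  have e2: "(p ! iN, p ! i) \<in> E"
  proof (cases "i = L - 1")
    case True then show ?thesis using cl lastp hdp sym_E unfolding iN_def by (simp add: symD)
  next
    case False then show ?thesis using wE[of i] iL sym_E unfolding iN_def by (simp add: symD)
  qed
  have ipL: "ip < L" "iN < L" unfolding ip_def iN_def using iL L3 L_def by auto
  have dif: "ip \<noteq> i" "iN \<noteq> i" "ip \<noteq> iN" unfolding ip_def iN_def using iL L3 L_def by auto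
  have "p ! ip \<noteq> p ! i" "p ! iN \<noteq> p ! i" "p ! ip \<noteq> p ! iN"
    using dif ipL iL dp unfolding L_def by (simp_all add: nth_eq_iff_index_eq)
  moreover have "p ! ip \<le> M" "p ! iN \<le> M" unfolding M_def using ipL unfolding L_def by auto
  ultimately have "p ! ip < p ! i" "p ! iN < p ! i" using pi by auto
  then have "p ! ip = par (p ! i)" "p ! iN = par (p ! i)" using edge_up e1 e2 by blast+
  then show False using \<open>p ! ip \<noteq> p ! iN\<close> by simp
qed

lemma is_tree: "is_tree V E"
proof -
  have "E \<subseteq> V \<times> V" using edge_iff by auto
  moreover have "(v, v) \<notin> E" for v using edge_iff par_less by fastforce
  ultimately show ?thesis
    unfolding is_tree_def using finite_V sym_E connected no_cycle root_in_V by blast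
qed

lemma on_path_cut:
  assumes "u \<in> V" "v \<in> V" "u \<in> S" "v \<notin> S"
    and cut: "\<And>x y. (x, y) \<in> E \<Longrightarrow> x \<in> S \<Longrightarrow> y \<notin> S \<Longrightarrow> x = z \<or> y = z"
  shows "on_path E u z v"
proof -
  obtain p where p: "gpath E u v p" using connected[OF assms(1,2)] by blast
  then have "z \<in> set p" using walk_crosses_cut[of E p S z] assms(3,4) cut unfolding gpath_def by blast
  then show ?thesis using p unfolding on_path_def by blast
qed

lemma not_on_path_pendant:
  assumes "on_path E x w y" "x \<in> V" "y \<in> V" "w \<noteq> x" "w \<noteq> y"
    and pendant: "\<And>u. (w, u) \<in> E \<Longrightarrow> u = par w"
  shows False
proof -
  obtain p where p: "gpath E x y p" "w \<in> set p" using assms(1) unfolding on_path_def by blast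
  show False
  proof (rule gpath_avoids_pendant[OF sym_E p, of "V - {w}"])
    show "x \<in> V - {w}" "y \<in> V - {w}" using assms(2-5) by auto
    show "\<And>u v. (u, v) \<in> E \<Longrightarrow> u \<in> V - {w} \<Longrightarrow> v \<noteq> w \<Longrightarrow> v \<in> V - {w}"
      using edge_iff by blast
    show "\<And>u v. (w, u) \<in> E \<Longrightarrow> (w, v) \<in> E \<Longrightarrow> u = v" using pendant by metis
  qed (use assms(4,5) in auto)
qed

end

subsection \<open>A caterpillar with leaves n, ..., 2n - 1\<close>

text \<open>The spine is the path 0, ..., n - 3; leaf n + i hangs from spine vertex i - 1, truncated
  to the range of the spine, so leaves n, n + 1 and leaves 2n - 2, 2n - 1 form the two cherries.\<close>
definition spine_slot :: "nat \<Rightarrow> nat \<Rightarrow> nat" where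
  "spine_slot n i = min (i - 1) (n - 3)"

definition cat_vertices :: "nat \<Rightarrow> nat set" where
  "cat_vertices n = {..<n - 2} \<union> {n..<2 * n}"

definition cat_parent :: "nat \<Rightarrow> nat \<Rightarrow> nat" where
  "cat_parent n v = (if v < n then v - 1 else spine_slot n (v - n))"

locale caterpillar_tree =
  fixes n :: nat
  assumes n_ge_4: "4 \<le> n"
begin

abbreviation V :: "nat set" where "V \<equiv> cat_vertices n"
abbreviation par :: "nat \<Rightarrow> nat" where "par \<equiv> cat_parent n"

lemma vertex_iff: "v \<in> V \<longleftrightarrow> v < n - 2 \<or> (n \<le> v \<and> v < 2 * n)"
  unfolding cat_vertices_def by auto

lemma spine_slot_le: "spine_slot n i \<le> n - 3"
  unfolding spine_slot_def by simp

lemma spine_slot_lt: "spine_slot n i < n"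
  using n_ge_4 spine_slot_le[of i] by linarith

lemma spine_slot_eq_iff: "i < n \<Longrightarrow> k \<le> n - 3 \<Longrightarrow> spine_slot n i = k \<longleftrightarrow>
   (k = 0 \<and> i \<le> 1) \<or> (0 < k \<and> k < n - 3 \<and> i = k + 1) \<or> (k = n - 3 \<and> n - 2 \<le> i)"
  using n_ge_4 unfolding spine_slot_def min_def by auto

lemma spine_slot_eq_cases:
  "spine_slot n i = spine_slot n i' \<Longrightarrow> i \<noteq> i' \<Longrightarrow> i < n \<Longrightarrow> i' < n \<Longrightarrow>
   (i \<le> 1 \<and> i' \<le> 1) \<or> (n - 2 \<le> i \<and> n - 2 \<le> i')"
  using n_ge_4 unfolding spine_slot_def min_def by (auto split: if_splits)

lemma par_spine: "v < n \<Longrightarrow> par v = v - 1"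
  unfolding cat_parent_def by simp

lemma par_leaf: "n \<le> v \<Longrightarrow> par v = spine_slot n (v - n)"
  unfolding cat_parent_def by simp

lemma par_lt: "v \<in> V \<Longrightarrow> v \<noteq> 0 \<Longrightarrow> par v < n - 2"
  using n_ge_4 spine_slot_le[of "v - n"] unfolding cat_parent_def vertex_iff by auto

end

sublocale caterpillar_tree \<subseteq> parent_tree "cat_vertices n" "cat_parent n"
proof
  show "finite V" "0 \<in> V" using n_ge_4 unfolding cat_vertices_def by auto
  show "par v \<in> V" if "v \<in> V" "v \<noteq> 0" for v using par_lt[OF that] unfolding vertex_iff by blast
  show "par v < v" if "v \<in> V" "v \<noteq> 0" for v
    using that n_ge_4 spine_slot_le[of "v - n"] unfolding cat_parent_def vertex_iff by auto
qed

context caterpillar_tree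
begin

lemma leaf_neighbours: "n \<le> v \<Longrightarrow> v < 2 * n \<Longrightarrow> {u. (v, u) \<in> E} = {par v}"
proof -
  assume a: "n \<le> v" "v < 2 * n"
  have vV: "v \<in> V" "v \<noteq> 0" using a n_ge_4 unfolding vertex_iff by auto
  have "u = par v" if "(v, u) \<in> E" for u
  proof -
    have "u \<in> V" using that edge_iff by blast
    moreover have "(u \<noteq> 0 \<and> v = par u) \<longrightarrow> False" using par_lt[of u] \<open>u \<in> V\<close> a by auto
    ultimately show ?thesis using that edge_iff vV by blast
  qed
  then show ?thesis using edge_par[OF vV] by blast
qed

lemma leaf_pendant: "n \<le> v \<Longrightarrow> v < 2 * n \<Longrightarrow> (v, u) \<in> E \<Longrightarrow> u = par v"
  using leaf_neighbours by blast

lemma spine_edge_iff: "k < n - 2 \<Longrightarrow> (k, u) \<in> E \<longleftrightarrow>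
   (k \<noteq> 0 \<and> u = k - 1) \<or> (u = k + 1 \<and> k + 1 < n - 2) \<or> (n \<le> u \<and> u < 2 * n \<and> spine_slot n (u - n) = k)"
  using n_ge_4 unfolding edge_iff vertex_iff cat_parent_def by auto

lemma spine_neighbours_0: "{u. (0, u) \<in> E} = {1, n, n + 1}"
proof -
  have "(0, u) \<in> E \<longleftrightarrow> u = 1 \<or> u = n \<or> u = n + 1" for u
  proof -
    have "(0, u) \<in> E \<longleftrightarrow> (u = 1 \<and> 1 < n - 2) \<or> (n \<le> u \<and> u < 2 * n \<and> spine_slot n (u - n) = 0)"
      using spine_edge_iff[of 0 u] n_ge_4 by simp
    also have "\<dots> \<longleftrightarrow> u = 1 \<or> u = n \<or> u = n + 1"
    proof -
      have "(n \<le> u \<and> u < 2 * n \<and> spine_slot n (u - n) = 0) \<longleftrightarrow> (n \<le> u \<and> u < 2 * n \<and> u - n \<le> 1)"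
        using spine_slot_eq_iff[of "u - n" 0] n_ge_4 by auto
      then show ?thesis using n_ge_4 by auto
    qed
    finally show ?thesis .
  qed
  then show ?thesis by auto
qed

lemma spine_neighbours_mid: "0 < k \<Longrightarrow> k < n - 3 \<Longrightarrow> {u. (k, u) \<in> E} = {k - 1, k + 1, n + k + 1}"
proof -
  assume k: "0 < k" "k < n - 3"
  have "(k, u) \<in> E \<longleftrightarrow> u = k - 1 \<or> u = k + 1 \<or> u = n + k + 1" for u
  proof -
    have "(k, u) \<in> E \<longleftrightarrow> u = k - 1 \<or> u = k + 1 \<or> (n \<le> u \<and> u < 2 * n \<and> spine_slot n (u - n) = k)"
      using spine_edge_iff[of k u] k by auto
    also have "(n \<le> u \<and> u < 2 * n \<and> spine_slot n (u - n) = k) \<longleftrightarrow> u = n + k + 1"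
    proof -
      have ai: "spine_slot n (u - n) = k \<longleftrightarrow> u - n = k + 1" if "u - n < n"
        using spine_slot_eq_iff[of "u - n" k] k n_ge_4 that by auto
      show ?thesis
      proof
        assume a: "n \<le> u \<and> u < 2 * n \<and> spine_slot n (u - n) = k"
        then have "u - n < n" by linarith
        then have "u - n = k + 1" using ai a by blast
        then show "u = n + k + 1" using a by linarith
      next
        assume a: "u = n + k + 1"
        then have "u - n < n" "u - n = k + 1" using k by linarith+
        then show "n \<le> u \<and> u < 2 * n \<and> spine_slot n (u - n) = k" using ai a k by auto
      qed
    qed
    finally show ?thesis .
  qed
  then show ?thesis by auto
qed

lemma spine_neighbours_last: "{u. (n - 3, u) \<in> E} = {n - 4, 2 * n - 2, 2 * n - 1}"
proof -
  have "(n - 3, u) \<in> E \<longleftrightarrow> u = n - 4 \<or> u = 2 * n - 2 \<or> u = 2 * n - 1" for u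
  proof -
    have "(n - 3, u) \<in> E \<longleftrightarrow> u = n - 4 \<or> (n \<le> u \<and> u < 2 * n \<and> spine_slot n (u - n) = n - 3)"
      using spine_edge_iff[of "n - 3" u] n_ge_4 by auto
    also have "(n \<le> u \<and> u < 2 * n \<and> spine_slot n (u - n) = n - 3) \<longleftrightarrow> u = 2 * n - 2 \<or> u = 2 * n - 1"
    proof -
      have ai: "spine_slot n (u - n) = n - 3 \<longleftrightarrow> n - 2 \<le> u - n" if "u - n < n"
        using spine_slot_eq_iff[of "u - n" "n - 3"] n_ge_4 that by auto
      show ?thesis
      proof
        assume a: "n \<le> u \<and> u < 2 * n \<and> spine_slot n (u - n) = n - 3"
        then have "u - n < n" by linarith
        then have "n - 2 \<le> u - n" using ai a by blast
        then show "u = 2 * n - 2 \<or> u = 2 * n - 1" using a by linarith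
      next
        assume a: "u = 2 * n - 2 \<or> u = 2 * n - 1"
        then have "u - n < n" "n - 2 \<le> u - n" "n \<le> u" "u < 2 * n" using n_ge_4 by auto
        then show "n \<le> u \<and> u < 2 * n \<and> spine_slot n (u - n) = n - 3" using ai by blast
      qed
    qed
    finally show ?thesis .
  qed
  then show ?thesis by auto
qed

lemma degree_spine: "k < n - 2 \<Longrightarrow> degree E k = 3"
proof -
  assume k: "k < n - 2"
  consider "k = 0" | "0 < k \<and> k < n - 3" | "k = n - 3" using k by linarith
  then show ?thesis
  proof cases
    case 1 then show ?thesis unfolding degree_def using spine_neighbours_0 n_ge_4 by simp
  next
    case 2
    have "card {k - 1, k + 1, n + k + 1} = 3" using 2 n_ge_4 by (auto simp: card_insert_if)
    then show ?thesis unfolding degree_def using spine_neighbours_mid[of k] 2 by simp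
  next
    case 3
    have "card {n - 4, 2 * n - 2, 2 * n - 1} = 3" using n_ge_4 by (auto simp: card_insert_if)
    then show ?thesis unfolding degree_def using spine_neighbours_last 3 by simp
  qed
qed

lemma degree_leaf: "n \<le> v \<Longrightarrow> v < 2 * n \<Longrightarrow> degree E v = 1"
  unfolding degree_def using leaf_neighbours by simp

lemma leaves_eq: "leaves V E = {n..<2 * n}"
  unfolding leaves_def using degree_spine degree_leaf unfolding vertex_iff by force

lemma interior_eq: "interior_vertices V E = {..<n - 2}"
  unfolding interior_vertices_def leaves_eq unfolding cat_vertices_def using n_ge_4 by auto

lemma cherries_subset: "cherries V E \<subseteq> {{n, n + 1}, {2 * n - 2, 2 * n - 1}}"
proof
  fix c assume "c \<in> cherries V E"
  then obtain a b w where c: "c = {a, b}" and ab: "a \<in> leaves V E" "b \<in> leaves V E" "a \<noteq> b"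
    and w: "(a, w) \<in> E" "(b, w) \<in> E"
    unfolding cherries_def by blast
  have leaf: "n \<le> a" "a < 2 * n" "n \<le> b" "b < 2 * n" using ab leaves_eq by auto
  then have "spine_slot n (a - n) = spine_slot n (b - n)"
    using leaf_pendant[of a w] leaf_pendant[of b w] w par_leaf by simp
  moreover have "a - n \<noteq> b - n" "a - n < n" "b - n < n" using ab(3) leaf by auto
  ultimately have "(a - n \<le> 1 \<and> b - n \<le> 1) \<or> (n - 2 \<le> a - n \<and> n - 2 \<le> b - n)"
    by (rule spine_slot_eq_cases)
  then show "c \<in> {{n, n + 1}, {2 * n - 2, 2 * n - 1}}"
  proof (elim disjE conjE)
    assume "a - n \<le> 1" "b - n \<le> 1"
    then have "a = n \<or> a = n + 1" "b = n \<or> b = n + 1" using leaf by auto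
    then show ?thesis using ab(3) c by auto
  next
    assume "n - 2 \<le> a - n" "n - 2 \<le> b - n"
    then have "a = 2 * n - 2 \<or> a = 2 * n - 1" "b = 2 * n - 2 \<or> b = 2 * n - 1" using leaf by auto
    then show ?thesis using ab(3) c by auto
  qed
qed

lemma card_cherries: "card (cherries V E) \<le> 2"
proof -
  have "card (cherries V E) \<le> card {{n, n + 1}, {2 * n - 2, 2 * n - 1}}"
    using card_mono[OF _ cherries_subset] by simp
  also have "\<dots> \<le> 2" by (simp add: card_insert_if)
  finally show ?thesis .
qed

definition spine_pos :: "nat \<Rightarrow> nat" where "spine_pos v = (if v < n then v else spine_slot n (v - n))"

lemma spine_pos_leaf: "n \<le> v \<Longrightarrow> spine_pos v = spine_slot n (v - n)" unfolding spine_pos_def by simp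

lemma spine_pos_gt_closed:
  assumes "(u, v) \<in> E" "w < spine_pos u" "u \<noteq> w" "v \<noteq> w"
  shows "w < spine_pos v"
  using assms n_ge_4 spine_slot_lt unfolding edge_iff vertex_iff cat_parent_def spine_pos_def
  by (auto split: if_splits)

lemma spine_pos_lt_closed:
  assumes "(u, v) \<in> E" "spine_pos u < w" "u \<noteq> w" "v \<noteq> w"
  shows "spine_pos v < w"
  using assms n_ge_4 spine_slot_lt unfolding edge_iff vertex_iff cat_parent_def spine_pos_def
  by (auto split: if_splits)

lemma spine_neighbour_pos:
  "w < n - 2 \<Longrightarrow> (w, u) \<in> E \<Longrightarrow>
    (w \<noteq> 0 \<and> u = w - 1 \<and> spine_pos u = w - 1) \<or> (u = w + 1 \<and> spine_pos u = w + 1) \<or> spine_pos u = w"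
  using spine_edge_iff[of w u] unfolding spine_pos_def by auto

lemma not_on_path_spine_right:
  assumes "w < n - 2" "on_path E x w y" "x \<noteq> w" "y \<noteq> w" "w < spine_pos x" "w < spine_pos y"
  shows False
proof -
  obtain p where gp: "gpath E x y p" and wp: "w \<in> set p" using assms(2) unfolding on_path_def by blast
  show False
  proof (rule gpath_avoids_pendant[OF sym_E gp wp, of "{v. v \<noteq> w \<and> w < spine_pos v}"])
    show "w \<noteq> x" "w \<noteq> y" using assms by auto
    show "x \<in> {v. v \<noteq> w \<and> w < spine_pos v}" "y \<in> {v. v \<noteq> w \<and> w < spine_pos v}" using assms by auto
    show "\<And>u v. (u, v) \<in> E \<Longrightarrow> u \<in> {v. v \<noteq> w \<and> w < spine_pos v} \<Longrightarrow> v \<noteq> w \<Longrightarrow> v \<in> {v. v \<noteq> w \<and> w < spine_pos v}"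
      using spine_pos_gt_closed by blast
    show "\<And>u v. (w, u) \<in> E \<Longrightarrow> (w, v) \<in> E \<Longrightarrow> u \<in> {v. v \<noteq> w \<and> w < spine_pos v} \<Longrightarrow> v \<in> {v. v \<noteq> w \<and> w < spine_pos v} \<Longrightarrow> u = v"
    proof -
      fix u v assume "(w, u) \<in> E" "(w, v) \<in> E" "u \<in> {v. v \<noteq> w \<and> w < spine_pos v}" "v \<in> {v. v \<noteq> w \<and> w < spine_pos v}"
      then have "u = w + 1" "v = w + 1" using spine_neighbour_pos[OF assms(1)] by fastforce+
      then show "u = v" by simp
    qed
  qed
qed

lemma not_on_path_spine_left:
  assumes "w < n - 2" "on_path E x w y" "x \<noteq> w" "y \<noteq> w" "spine_pos x < w" "spine_pos y < w"
  shows False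
proof -
  obtain p where gp: "gpath E x y p" and wp: "w \<in> set p" using assms(2) unfolding on_path_def by blast
  show False
  proof (rule gpath_avoids_pendant[OF sym_E gp wp, of "{v. v \<noteq> w \<and> spine_pos v < w}"])
    show "w \<noteq> x" "w \<noteq> y" using assms by auto
    show "x \<in> {v. v \<noteq> w \<and> spine_pos v < w}" "y \<in> {v. v \<noteq> w \<and> spine_pos v < w}" using assms by auto
    show "\<And>u v. (u, v) \<in> E \<Longrightarrow> u \<in> {v. v \<noteq> w \<and> spine_pos v < w} \<Longrightarrow> v \<noteq> w \<Longrightarrow> v \<in> {v. v \<noteq> w \<and> spine_pos v < w}"
      using spine_pos_lt_closed by blast
    show "\<And>u v. (w, u) \<in> E \<Longrightarrow> (w, v) \<in> E \<Longrightarrow> u \<in> {v. v \<noteq> w \<and> spine_pos v < w} \<Longrightarrow> v \<in> {v. v \<noteq> w \<and> spine_pos v < w} \<Longrightarrow> u = v"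
    proof -
      fix u v assume "(w, u) \<in> E" "(w, v) \<in> E" "u \<in> {v. v \<noteq> w \<and> spine_pos v < w}" "v \<in> {v. v \<noteq> w \<and> spine_pos v < w}"
      then have "u = w - 1" "v = w - 1" using spine_neighbour_pos[OF assms(1)] by fastforce+
      then show "u = v" by simp
    qed
  qed
qed

lemma on_path_leaf_parent:
  assumes "n \<le> v" "v < 2 * n" "u \<in> V" "u \<noteq> v"
  shows "on_path E u (par v) v"
proof (rule on_path_cut[of u v "V - {v}"])
  show "v \<in> V" using assms(1,2) unfolding vertex_iff by blast
  fix x y assume "(x, y) \<in> E" "x \<in> V - {v}" "y \<notin> V - {v}"
  then have "y = v" "(v, x) \<in> E" using edge_iff sym_E by (auto dest: symD)
  then show "x = par v \<or> y = par v" using leaf_pendant[OF assms(1,2)] by blast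
qed (use assms in auto)

lemma on_path_leaves_spine:
  assumes "i < j" "j < k" "k < n"
  shows "on_path E (n + i) (j - 1) (n + k)"
proof (rule on_path_cut[of _ _ "{v. v < j - 1} \<union> {v. n \<le> v \<and> v < n + j}"])
  show "n + i \<in> V" "n + k \<in> V" using assms unfolding vertex_iff by auto
  fix x y assume e: "(x, y) \<in> E" and xS: "x \<in> {v. v < j - 1} \<union> {v. n \<le> v \<and> v < n + j}"
    and yS: "y \<notin> {v. v < j - 1} \<union> {v. n \<le> v \<and> v < n + j}"
  have xV: "x \<in> V" and yV: "y \<in> V" using e edge_iff by auto
  have "(x \<noteq> 0 \<and> y = par x) \<or> (y \<noteq> 0 \<and> x = par y)" using e edge_iff by blast
  then show "x = j - 1 \<or> y = j - 1"
  proof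
    assume a: "x \<noteq> 0 \<and> y = par x"
    show ?thesis
    proof (cases "x < n")
      case True
      then show ?thesis using xS yS a par_spine by auto
    next
      case False
      then have "n \<le> x" "x < n + j" using xS by auto
      moreover have "y = spine_slot n (x - n)" using a False par_leaf by simp
      ultimately have "y \<le> j - 1" "y < n" using spine_slot_le[of "x - n"] n_ge_4
        unfolding spine_slot_def by auto
      then show ?thesis using yS by auto
    qed
  next
    assume a: "y \<noteq> 0 \<and> x = par y"
    show ?thesis
    proof (cases "y < n")
      case True
      then show ?thesis using xS yS a par_spine by auto
    next
      case False
      then have "n + j \<le> y" "y < 2 * n" using yS yV unfolding vertex_iff by auto
      moreover have "x = spine_slot n (y - n)" using a False par_leaf by simp
      ultimately have "j - 1 \<le> x" "x < n" using assms spine_slot_le[of "y - n"] n_ge_4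
        unfolding spine_slot_def by auto
      then show ?thesis using xS by auto
    qed
  qed
qed (use assms in auto)

text \<open>A vertex on all three paths between the leaves n + i, n + j, n + k (with i < j < k)
  is not a leaf, as no leaf lies inside a path; a spine vertex left of j - 1 separates neither
  n + j from n + k, and one right of it separates neither n + i from n + j.\<close>
lemma median_of_leaves_unique:
  assumes "i < j" "j < k" "k < n" "w \<in> V"
    and paths: "on_path E (n + i) w (n + j)" "on_path E (n + j) w (n + k)" "on_path E (n + i) w (n + k)"
  shows "w = j - 1"
proof -
  have leaves: "n + i \<in> V" "n + j \<in> V" "n + k \<in> V" using assms unfolding vertex_iff by auto
  show ?thesis
  proof (cases "n \<le> w")
    case True
    have "w < 2 * n" using assms(4) True unfolding vertex_iff by linarith
    then show ?thesis
      using not_on_path_pendant[OF paths(1) leaves(1,2)] not_on_path_pendant[OF paths(2) leaves(2,3)]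
        not_on_path_pendant[OF paths(3) leaves(1,3)] leaf_pendant[OF True] assms(1,2) by fastforce
  next
    case False
    then have w: "w < n - 2" "w \<noteq> n + i" "w \<noteq> n + j" "w \<noteq> n + k"
      using assms(4) unfolding vertex_iff by auto
    have pos: "spine_pos (n + i) \<le> j - 1" "spine_pos (n + j) = j - 1" "j - 1 \<le> spine_pos (n + k)"
      using assms spine_pos_leaf[of "n + i"] spine_pos_leaf[of "n + j"] spine_pos_leaf[of "n + k"]
      unfolding spine_slot_def by auto
    show ?thesis
    proof (rule linorder_cases[of w "j - 1"])
      assume "w < j - 1"
      then show ?thesis
        using not_on_path_spine_right[OF w(1) paths(2) w(3,4)[symmetric]] pos leaves by auto
    next
      assume "j - 1 < w"
      then show ?thesis
        using not_on_path_spine_left[OF w(1) paths(1) w(2,3)[symmetric]] pos leaves by auto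
    qed
  qed
qed

lemma med_leaves:
  assumes "i < j" "j < k" "k < n" "s = {p, m, q}"
    and phi: "phi p = n + i" "phi m = n + j" "phi q = n + k"
  shows "med V E phi s = j - 1"
  unfolding med_def
proof (rule the_equality)
  have sym: "on_path E u w v \<Longrightarrow> on_path E v w u" for u w v using on_path_sym[OF sym_E] .
  have all_pairs: "(\<forall>a\<in>s. \<forall>b\<in>s. a \<noteq> b \<longrightarrow> on_path E (phi a) w (phi b)) \<longleftrightarrow>
      on_path E (n + i) w (n + j) \<and> on_path E (n + j) w (n + k) \<and> on_path E (n + i) w (n + k)" for w
    using assms sym by auto
  have leaf: "n \<le> n + j" "n + j < 2 * n" using assms by auto
  have par_j: "par (n + j) = j - 1" using par_leaf[of "n + j"] assms unfolding spine_slot_def by simp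
  show "j - 1 \<in> V \<and> (\<forall>a\<in>s. \<forall>b\<in>s. a \<noteq> b \<longrightarrow> on_path E (phi a) (j - 1) (phi b))"
    unfolding all_pairs using on_path_leaf_parent[OF leaf] par_j on_path_leaves_spine[OF assms(1-3)]
      sym assms(1-3) by (auto simp: vertex_iff)
  show "w = j - 1" if "w \<in> V \<and> (\<forall>a\<in>s. \<forall>b\<in>s. a \<noteq> b \<longrightarrow> on_path E (phi a) w (phi b))" for w
    using median_of_leaves_unique[OF assms(1-3)] that unfolding all_pairs by blast
qed

end

lemma obtain_sorted_triple:
  fixes r :: "'a \<Rightarrow> nat"
  assumes "card s = 3" "inj_on r s"
  obtains p m q where "s = {p, m, q}" "r p < r m" "r m < r q"
proof -
  obtain a b c where s: "s = {a, b, c}" and d: "a \<noteq> b" "b \<noteq> c" "a \<noteq> c"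
    using assms(1) unfolding card_3_iff by blast
  have "r a \<noteq> r b" "r b \<noteq> r c" "r a \<noteq> r c" using assms(2) d unfolding s inj_on_def by auto
  then consider "r a < r b" "r b < r c" | "r a < r c" "r c < r b" | "r b < r a" "r a < r c"
    | "r b < r c" "r c < r a" | "r c < r a" "r a < r b" | "r c < r b" "r b < r a" by linarith
  then show thesis
    by cases (use that s in \<open>auto simp: insert_commute\<close>)
qed

context caterpillar_tree
begin

lemma caterpillar_leaf_labelling:
  assumes "bij_betw r X {..<n}"
  shows "caterpillar X V E (\<lambda>x. n + r x)"
proof -
  have "v \<in> (\<lambda>k. n + k) ` {..<n}" if "v \<in> {n..<2 * n}" for v
    by (rule rev_image_eqI[of "v - n"]) (use that in auto)
  then have "bij_betw (\<lambda>k. n + k) {..<n} {n..<2 * n}" unfolding bij_betw_def by auto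
  then have "bij_betw (\<lambda>x. n + r x) X (leaves V E)"
    using bij_betw_trans[OF assms] unfolding leaves_eq comp_def by blast
  then show ?thesis
    unfolding caterpillar_def binary_phylo_tree_def phylo_tree_def
    using is_tree card_cherries degree_spine unfolding interior_eq by auto
qed

lemma med_middle:
  assumes "bij_betw r X {..<n}" "s \<subseteq> X" "card s = 3"
  obtains m where "middle r s m" "0 < r m" "med V E (\<lambda>x. n + r x) s = r m - 1"
    "r m - 1 \<in> interior_vertices V E"
proof -
  obtain p m q where s: "s = {p, m, q}" and less: "r p < r m" "r m < r q"
    using obtain_sorted_triple[OF assms(3) inj_on_subset[of r X s]] assms(1,2)
    unfolding bij_betw_def by blast
  have "r q < n" using assms(1,2) s unfolding bij_betw_def by auto
  then have "med V E (\<lambda>x. n + r x) s = r m - 1" using med_leaves[OF less _ s, of "\<lambda>x. n + r x"] by simp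
  moreover have "middle r s m" unfolding middle_def using s less by blast
  moreover have "r m - 1 \<in> interior_vertices V E" using less \<open>r q < n\<close> unfolding interior_eq by auto
  ultimately show thesis using that less by simp
qed

end

theorem theorem2:
  fixes X :: "'a set" and \<tau> :: "'a set set"
  assumes "finite X" and "card X \<ge> 4"
    and "\<tau> \<subseteq> {s. s \<subseteq> X \<and> card s = 3}"
    and "\<tau> \<noteq> {}" and "thin \<tau>"
  shows "\<exists>(V :: nat set) E phi. caterpillar X V E phi
           \<and> (\<forall>s\<in>\<tau>. med V E phi s \<in> interior_vertices V E)
           \<and> inj_on (med V E phi) \<tau>"
proof -
  interpret caterpillar_tree "card X" using assms(2) by unfold_locales
  obtain y where "y \<in> X" using assms(2) by fastforce
  then obtain r where r: "bij_betw r X {..<card X}" "distinct_middles r \<tau>"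
    using distinct_middles_order_exists[OF assms(1,3,5)] by blast
  let ?phi = "\<lambda>x. card X + r x"
  have \<tau>X: "s \<subseteq> X" "card s = 3" if "s \<in> \<tau>" for s using assms(3) that by auto
  have "inj_on (med V E ?phi) \<tau>"
  proof (rule inj_onI)
    fix s1 s2 assume s: "s1 \<in> \<tau>" "s2 \<in> \<tau>" and eq: "med V E ?phi s1 = med V E ?phi s2"
    obtain m1 where m1: "middle r s1 m1" "0 < r m1" "med V E ?phi s1 = r m1 - 1"
      using med_middle[OF r(1) \<tau>X[OF s(1)]] by blast
    obtain m2 where m2: "middle r s2 m2" "0 < r m2" "med V E ?phi s2 = r m2 - 1"
      using med_middle[OF r(1) \<tau>X[OF s(2)]] by blast
    have "m1 \<in> X" "m2 \<in> X" "r m1 = r m2" using m1 m2 eq \<tau>X s unfolding middle_def by auto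
    then have "m1 = m2" using r(1) unfolding bij_betw_def by (metis inj_onD)
    then show "s1 = s2" using r(2) s m1(1) m2(1) unfolding distinct_middles_def by blast
  qed
  moreover have "med V E ?phi s \<in> interior_vertices V E" if "s \<in> \<tau>" for s
    using med_middle[OF r(1) \<tau>X[OF that]] by metis
  ultimately show ?thesis using caterpillar_leaf_labelling[OF r(1)] by blast
qed

end
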